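(* (Generalized Artin's Lemma.) Let $G$ be a profinite group acting faithfully by automorphisms on a field $h$, such that for every $x\in h$ the stabilizer $S(x)=\{\sigma\in G:\sigma(x)=x\}$ is an open subgroup of $G$. Let $k=h^G$ be the subfield of $h$ of elements fixed by all of $G$. If $h/k$ is an outer extension, then $h/k$ is algebraic and Galois, and the action identifies $G$ with $\mathrm{Gal}(h/k)$ (i.e. $\mathrm{Gal}(h/k)=G$).
   Context: "Field" means a not necessarily commutative division ring. For a field extension $h/k$ and $x\in h$, $x$ is algebraic over $k$ if the subfield $k(x)$ generated by $k$ and $x$ is finite-dimensional both as a left and a right $k$-vector space; $h/k$ is algebraic if all elements of $h$ are algebraic over $k$. $h/k$ is outer if the only inner automorphism of $h$ fixing $k$ pointwise is the identity. $\mathrm{Gal}(h/k)$ is the group of automorphisms of $h$ fixing $k$ pointwise, and $h/k$ is Galois if the subfield of $h$ fixed by $\mathrm{Gal}(h/k)$ is $k$. *)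

theory Defs
  imports "HOL-Analysis.Analysis" "HOL-Algebra.Group"
begin

definition topological_group_on :: "('g, 'm) monoid_scheme \<Rightarrow> 'g topology \<Rightarrow> bool" where
  "topological_group_on G T \<longleftrightarrow> group G \<and> topspace T = carrier G
     \<and> continuous_map (prod_topology T T) T (\<lambda>(a, b). a \<otimes>\<^bsub>G\<^esub> b)
     \<and> continuous_map T T (\<lambda>a. inv\<^bsub>G\<^esub> a)"

definition totally_disconnected_space :: "'g topology \<Rightarrow> bool" where
  "totally_disconnected_space T \<longleftrightarrow> (\<forall>S. connectedin T S \<longrightarrow> (\<exists>a. S \<subseteq> {a}))"

definition profinite_group :: "('g, 'm) monoid_scheme \<Rightarrow> 'g topology \<Rightarrow> bool" where
  "profinite_group G T \<longleftrightarrow> topological_group_on G T \<and> compact_space T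
     \<and> Hausdorff_space T \<and> totally_disconnected_space T"

text \<open>The field h is the whole type 'a :: division_ring; subfields are subsets.\<close>

definition ring_automorphism :: "('a::division_ring \<Rightarrow> 'a) \<Rightarrow> bool" where
  "ring_automorphism f \<longleftrightarrow> bij f \<and> (\<forall>x y. f (x + y) = f x + f y)
     \<and> (\<forall>x y. f (x * y) = f x * f y) \<and> f 1 = 1"

definition is_subfield :: "'a::division_ring set \<Rightarrow> bool" where
  "is_subfield L \<longleftrightarrow> 0 \<in> L \<and> 1 \<in> L \<and> (\<forall>x\<in>L. \<forall>y\<in>L. x + y \<in> L \<and> x * y \<in> L)
     \<and> (\<forall>x\<in>L. - x \<in> L \<and> inverse x \<in> L)"

definition gen_subfield :: "'a::division_ring set \<Rightarrow> 'a \<Rightarrow> 'a set" where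
  "gen_subfield K x = \<Inter> {L. is_subfield L \<and> K \<subseteq> L \<and> x \<in> L}"

definition left_span :: "'a::division_ring set \<Rightarrow> 'a set \<Rightarrow> 'a set" where
  "left_span K S = {y. \<exists>c. (\<forall>s\<in>S. c s \<in> K) \<and> y = (\<Sum>s\<in>S. c s * s)}"

definition right_span :: "'a::division_ring set \<Rightarrow> 'a set \<Rightarrow> 'a set" where
  "right_span K S = {y. \<exists>c. (\<forall>s\<in>S. c s \<in> K) \<and> y = (\<Sum>s\<in>S. s * c s)}"

definition left_fin_dim :: "'a::division_ring set \<Rightarrow> 'a set \<Rightarrow> bool" where
  "left_fin_dim K L \<longleftrightarrow> (\<exists>S. finite S \<and> S \<subseteq> L \<and> L \<subseteq> left_span K S)"

definition right_fin_dim :: "'a::division_ring set \<Rightarrow> 'a set \<Rightarrow> bool" where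
  "right_fin_dim K L \<longleftrightarrow> (\<exists>S. finite S \<and> S \<subseteq> L \<and> L \<subseteq> right_span K S)"

definition algebraic_over :: "'a::division_ring set \<Rightarrow> 'a \<Rightarrow> bool" where
  "algebraic_over K x \<longleftrightarrow> left_fin_dim K (gen_subfield K x) \<and> right_fin_dim K (gen_subfield K x)"

definition algebraic_ext :: "'a::division_ring set \<Rightarrow> bool" where
  "algebraic_ext K \<longleftrightarrow> (\<forall>x. algebraic_over K x)"

definition outer_ext :: "'a::division_ring set \<Rightarrow> bool" where
  "outer_ext K \<longleftrightarrow> (\<forall>u. u \<noteq> 0 \<longrightarrow> (\<forall>x\<in>K. u * x * inverse u = x)
      \<longrightarrow> (\<forall>y. u * y * inverse u = y))"

definition Gal :: "'a::division_ring set \<Rightarrow> ('a \<Rightarrow> 'a) set" where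
  "Gal K = {f. ring_automorphism f \<and> (\<forall>x\<in>K. f x = x)}"

definition galois_ext :: "'a::division_ring set \<Rightarrow> bool" where
  "galois_ext K \<longleftrightarrow> {y. \<forall>f\<in>Gal K. f y = y} = K"

definition action_by_automorphisms ::
  "('g, 'm) monoid_scheme \<Rightarrow> ('g \<Rightarrow> 'a::division_ring \<Rightarrow> 'a) \<Rightarrow> bool" where
  "action_by_automorphisms G act \<longleftrightarrow>
     (\<forall>g\<in>carrier G. ring_automorphism (act g))
     \<and> (\<forall>g\<in>carrier G. \<forall>g'\<in>carrier G. act (g \<otimes>\<^bsub>G\<^esub> g') = act g \<circ> act g')
     \<and> act \<one>\<^bsub>G\<^esub> = id"

definition fixed_field :: "('g, 'm) monoid_scheme \<Rightarrow> ('g \<Rightarrow> 'a \<Rightarrow> 'a) \<Rightarrow> 'a set" where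
  "fixed_field G act = {x. \<forall>g\<in>carrier G. act g x = x}"

end

theory Submission
  imports Defs
begin

text \<open>
  For finite X \<subseteq> h the pointwise stabilizer S(X) is open, hence of finite index in the
  compact group G, so the automorphisms act g induce only finitely many maps on the field
  L = h^S(X). Artin's minimal-relation argument bounds the left and the right dimension of L
  over k = h^G by their number; as k(x) \<subseteq> L for X = {x}, h/k is algebraic. For f \<in> Gal(h/k),
  Dedekind's independence argument, which over a division ring needs h/k to be outer, shows
  that the restriction of f to L is one of these maps. Hence the closed sets
  {g. act g x = f x} have the finite intersection property, and compactness of G yields g
  with f = act g.
\<close>

lemma ring_automorphism_add: "ring_automorphism f \<Longrightarrow> f (x + y) = f x + f y"
  unfolding ring_automorphism_def by blast

lemma ring_automorphism_mult: "ring_automorphism f \<Longrightarrow> f (x * y) = f x * f y"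
  unfolding ring_automorphism_def by blast

lemma ring_automorphism_one: "ring_automorphism f \<Longrightarrow> f 1 = 1"
  unfolding ring_automorphism_def by blast

lemma ring_automorphism_zero: "ring_automorphism f \<Longrightarrow> f 0 = 0"
  using ring_automorphism_add[of f 0 0] by simp

lemma ring_automorphism_uminus: "ring_automorphism f \<Longrightarrow> f (- x) = - f x"
  using ring_automorphism_add[of f x "- x"] ring_automorphism_zero[of f]
  by (simp add: eq_neg_iff_add_eq_0 add.commute)

lemma ring_automorphism_inverse: "ring_automorphism f \<Longrightarrow> f (inverse x) = inverse (f x)"
  using ring_automorphism_mult[of f x "inverse x"] ring_automorphism_one[of f]
    ring_automorphism_zero[of f]
  by (cases "x = 0") (auto intro: inverse_unique[symmetric])

lemma ring_automorphism_sum: "ring_automorphism f \<Longrightarrow> f (sum g A) = (\<Sum>a\<in>A. f (g a))"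
  by (induction A rule: infinite_finite_induct)
    (simp_all add: ring_automorphism_zero ring_automorphism_add)

definition fixed_points :: "('a \<Rightarrow> 'a) set \<Rightarrow> 'a set" where
  "fixed_points \<Gamma> = {y. \<forall>\<sigma>\<in>\<Gamma>. \<sigma> y = y}"

lemma is_subfield_fixed_points:
  assumes "\<And>\<sigma>. \<sigma> \<in> \<Gamma> \<Longrightarrow> ring_automorphism \<sigma>"
  shows "is_subfield (fixed_points \<Gamma>)"
  using assms
  by (auto simp: is_subfield_def fixed_points_def ring_automorphism_zero ring_automorphism_one
      ring_automorphism_add ring_automorphism_mult ring_automorphism_uminus ring_automorphism_inverse)

lemma gen_subfield_least: "is_subfield L \<Longrightarrow> K \<subseteq> L \<Longrightarrow> x \<in> L \<Longrightarrow> gen_subfield K x \<subseteq> L"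
  unfolding gen_subfield_def by blast

section \<open>Linear algebra over a division ring\<close>

lemma underdetermined_system_nontrivial_solution:
  fixes a :: "'j \<Rightarrow> 'i \<Rightarrow> 'a::division_ring"
  assumes "finite I" "finite J" "card I < card J"
  shows "\<exists>c. (\<exists>j\<in>J. c j \<noteq> 0) \<and> (\<forall>i\<in>I. (\<Sum>j\<in>J. c j * a j i) = 0)"
  using assms
proof (induction I arbitrary: J a rule: finite_induct)
  case empty
  then obtain j where "j \<in> J" by fastforce
  then show ?case by (intro exI[of _ "\<lambda>j. 1"]) auto
next
  case (insert i0 I)
  show ?case
  proof (cases "\<forall>j\<in>J. a j i0 = 0")
    case True
    with insert show ?thesis by fastforce
  next
    case False
    then obtain p where p: "p \<in> J" "a p i0 \<noteq> 0" by auto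
    define J' where "J' = J - {p}"
    define a' where "a' j i = a j i - a j i0 * inverse (a p i0) * a p i" for j i
    have "card I < card J'" using insert p by (simp add: J'_def)
    then obtain c' where c': "\<exists>j\<in>J'. c' j \<noteq> 0" "\<forall>i\<in>I. (\<Sum>j\<in>J'. c' j * a' j i) = 0"
      using insert by (metis J'_def finite_Diff)
    define s where "s = (\<Sum>j\<in>J'. c' j * a j i0)"
    define c where "c = c'(p := - s * inverse (a p i0))"
    have reduce: "(\<Sum>j\<in>J. c j * a j i) = (\<Sum>j\<in>J'. c' j * a' j i)" for i
    proof -
      have "(\<Sum>j\<in>J. c j * a j i) = c p * a p i + (\<Sum>j\<in>J'. c' j * a j i)"
        using p insert.prems(1) by (simp add: J'_def c_def sum.remove)
      also have "\<dots> = (\<Sum>j\<in>J'. c' j * a' j i)"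
        by (simp add: c_def s_def a'_def right_diff_distrib sum_subtractf sum_distrib_right
            mult.assoc)
      finally show ?thesis .
    qed
    have "a' j i0 = 0" for j using p(2) by (simp add: a'_def mult.assoc)
    then have "\<forall>i\<in>insert i0 I. (\<Sum>j\<in>J. c j * a j i) = 0"
      using c'(2) by (simp add: reduce)
    moreover have "\<exists>j\<in>J. c j \<noteq> 0" using c'(1) by (auto simp: J'_def c_def)
    ultimately show ?thesis by blast
  qed
qed

lemma normalized_minimal_support:
  fixes c0 :: "'i \<Rightarrow> 'a::division_ring"
  assumes "finite I" "P c0" "i0 \<in> I" "c0 i0 \<noteq> 0"
    and scale: "\<And>c a. P c \<Longrightarrow> P (\<lambda>i. a * c i)"
  obtains c i1 where "P c" "i1 \<in> I" "c i1 = 1"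
    "\<And>d. P d \<Longrightarrow> d i1 = 0 \<Longrightarrow> \<forall>i\<in>I. c i = 0 \<longrightarrow> d i = 0 \<Longrightarrow> \<forall>i\<in>I. d i = 0"
proof -
  define supp where "supp c = {i\<in>I. c i \<noteq> 0}" for c :: "'i \<Rightarrow> 'a"
  define S where "S = {supp c |c. P c \<and> supp c \<noteq> {}}"
  have "finite S" using \<open>finite I\<close> by (rule finite_subset[rotated, OF finite_Pow_iff[THEN iffD2]])
      (auto simp: S_def supp_def)
  moreover have "supp c0 \<in> S" using assms(2-4) by (auto simp: S_def supp_def)
  ultimately obtain m where m: "m \<in> S" "\<forall>b\<in>S. b \<subseteq> m \<longrightarrow> m = b"
    using finite_has_minimal2[of S "supp c0"] by blast
  then obtain c where c: "P c" "supp c \<noteq> {}" "m = supp c" by (auto simp: S_def)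
  have minimal: "supp d = supp c" if "P d" "supp d \<noteq> {}" "supp d \<subseteq> supp c" for d
    using m c(3) that by (auto simp: S_def)
  obtain i1 where i1: "i1 \<in> I" "c i1 \<noteq> 0" using c(2) by (auto simp: supp_def)
  show thesis
  proof
    show "P (\<lambda>i. inverse (c i1) * c i)" using c(1) by (rule scale)
    show "inverse (c i1) * c i1 = 1" using i1 by simp
    fix d assume d: "P d" "d i1 = 0" "\<forall>i\<in>I. inverse (c i1) * c i = 0 \<longrightarrow> d i = 0"
    then have "supp d \<subseteq> supp c" "supp d \<noteq> supp c" using i1 by (auto simp: supp_def)
    then show "\<forall>i\<in>I. d i = 0" using minimal[OF d(1)] by (auto simp: supp_def)
  qed fact
qed

definition left_indep :: "'a::division_ring set \<Rightarrow> 'a set \<Rightarrow> bool" where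
  "left_indep K Y \<longleftrightarrow>
     (\<forall>c. (\<forall>y\<in>Y. c y \<in> K) \<and> (\<Sum>y\<in>Y. c y * y) = 0 \<longrightarrow> (\<forall>y\<in>Y. c y = 0))"

lemma mem_left_span:
  assumes "is_subfield K" "finite Y" "z \<in> Y"
  shows "z \<in> left_span K Y"
proof -
  have "(\<Sum>s\<in>Y. (if s = z then 1 else 0) * s) = (\<Sum>s\<in>Y. if s = z then s else 0)"
    by (rule sum.cong) auto
  also have "\<dots> = z" using assms(2,3) by simp
  finally show ?thesis using assms(1) unfolding left_span_def is_subfield_def
    by (intro CollectI exI[of _ "\<lambda>s. if s = z then 1 else 0"]) auto
qed

lemma left_span_if_dependent_insert:
  assumes K: "is_subfield K" and Y: "finite Y" "left_indep K Y"
    and dep: "\<not> left_indep K (insert z Y)" and "z \<notin> Y"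
  shows "z \<in> left_span K Y"
proof -
  obtain c where c: "\<forall>y\<in>insert z Y. c y \<in> K" "(\<Sum>y\<in>insert z Y. c y * y) = 0"
    "\<exists>y\<in>insert z Y. c y \<noteq> 0"
    using dep unfolding left_indep_def by blast
  have rel: "c z * z + (\<Sum>y\<in>Y. c y * y) = 0" using c(2) Y(1) \<open>z \<notin> Y\<close> by simp
  have "c z \<noteq> 0"
  proof
    assume "c z = 0"
    then have "\<forall>y\<in>Y. c y = 0" using rel c(1) Y(2) unfolding left_indep_def by simp
    with \<open>c z = 0\<close> c(3) show False by auto
  qed
  have "c z * z = - (\<Sum>y\<in>Y. c y * y)" using rel by (simp add: eq_neg_iff_add_eq_0)
  moreover have "z = inverse (c z) * (c z * z)"
    using \<open>c z \<noteq> 0\<close> by (simp flip: mult.assoc)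
  ultimately have "z = inverse (c z) * - (\<Sum>y\<in>Y. c y * y)" by simp
  then have "z = (\<Sum>y\<in>Y. (- (inverse (c z) * c y)) * y)"
    by (simp add: sum_distrib_left mult.assoc sum_negf)
  moreover have "\<forall>y\<in>Y. - (inverse (c z) * c y) \<in> K" using c(1) K by (simp add: is_subfield_def)
  ultimately show ?thesis unfolding left_span_def
    by (intro CollectI exI[of _ "\<lambda>y. - (inverse (c z) * c y)"]) simp
qed

lemma left_span_of_bounded_indep:
  assumes K: "is_subfield K"
    and bound: "\<And>Y. finite Y \<Longrightarrow> Y \<subseteq> F \<Longrightarrow> left_indep K Y \<Longrightarrow> card Y \<le> n"
  shows "\<exists>Y. finite Y \<and> Y \<subseteq> F \<and> card Y \<le> n \<and> F \<subseteq> left_span K Y"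
proof -
  let ?indep = "\<lambda>m. \<exists>Y. finite Y \<and> Y \<subseteq> F \<and> left_indep K Y \<and> card Y = m"
  have "?indep 0" by (intro exI[of _ "{}"]) (simp add: left_indep_def)
  then obtain m where m: "?indep m" and maximal: "\<And>m'. ?indep m' \<Longrightarrow> m' \<le> m"
    using Nat.ex_has_greatest_nat[of ?indep 0 n] bound by blast
  then obtain Y where Y: "finite Y" "Y \<subseteq> F" "left_indep K Y" "card Y = m" by blast
  have "z \<in> left_span K Y" if "z \<in> F" for z
  proof (cases "z \<in> Y")
    case True
    then show ?thesis using K Y(1) by (simp add: mem_left_span)
  next
    case False
    have "\<not> left_indep K (insert z Y)"
    proof
      assume "left_indep K (insert z Y)"
      then have "?indep (Suc m)" using Y \<open>z \<in> F\<close> False by (intro exI[of _ "insert z Y"]) auto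
      then show False using maximal by fastforce
    qed
    then show ?thesis using left_span_if_dependent_insert K Y(1,3) False by blast
  qed
  then show ?thesis using Y bound by blast
qed

section \<open>Artin's bound\<close>

lemma ring_automorphism_preserves_relation:
  fixes \<Phi> :: "('a::division_ring \<Rightarrow> 'a) set"
  assumes \<sigma>: "ring_automorphism \<sigma>"
    and stable: "\<And>\<phi>. \<phi> \<in> \<Phi> \<Longrightarrow> \<exists>\<psi>\<in>\<Phi>. \<forall>y\<in>L. \<sigma> (\<psi> y) = \<phi> y"
    and "Y \<subseteq> L" and rel: "\<forall>\<phi>\<in>\<Phi>. (\<Sum>y\<in>Y. c y * \<phi> y) = 0"
  shows "\<forall>\<phi>\<in>\<Phi>. (\<Sum>y\<in>Y. \<sigma> (c y) * \<phi> y) = 0"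
proof
  fix \<phi> assume "\<phi> \<in> \<Phi>"
  then obtain \<psi> where \<psi>: "\<psi> \<in> \<Phi>" "\<forall>y\<in>L. \<sigma> (\<psi> y) = \<phi> y" using stable by blast
  have "(\<Sum>y\<in>Y. \<sigma> (c y) * \<phi> y) = \<sigma> (\<Sum>y\<in>Y. c y * \<psi> y)"
    using \<psi>(2) \<open>Y \<subseteq> L\<close> \<sigma>
    by (auto simp: ring_automorphism_sum ring_automorphism_mult intro!: sum.cong)
  also have "\<dots> = 0" using rel \<psi>(1) ring_automorphism_zero[OF \<sigma>] by simp
  finally show "(\<Sum>y\<in>Y. \<sigma> (c y) * \<phi> y) = 0" .
qed

lemma left_indep_card_le_card_maps:
  fixes \<Gamma> \<Phi> :: "('a::division_ring \<Rightarrow> 'a) set"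
  assumes aut: "\<And>\<sigma>. \<sigma> \<in> \<Gamma> \<Longrightarrow> ring_automorphism \<sigma>"
    and "finite \<Phi>"
    and stable: "\<And>\<sigma> \<phi>. \<sigma> \<in> \<Gamma> \<Longrightarrow> \<phi> \<in> \<Phi> \<Longrightarrow> \<exists>\<psi>\<in>\<Phi>. \<forall>y\<in>L. \<sigma> (\<psi> y) = \<phi> y"
    and ident: "\<exists>\<phi>\<in>\<Phi>. \<forall>y\<in>L. \<phi> y = y"
    and Y: "finite Y" "Y \<subseteq> L" "left_indep (fixed_points \<Gamma>) Y"
  shows "card Y \<le> card \<Phi>"
proof (rule ccontr)
  assume "\<not> card Y \<le> card \<Phi>"
  define Sol where "Sol c \<longleftrightarrow> (\<forall>\<phi>\<in>\<Phi>. (\<Sum>y\<in>Y. c y * \<phi> y) = 0)" for c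
  obtain c0 y0 where c0: "Sol c0" "y0 \<in> Y" "c0 y0 \<noteq> 0"
    using underdetermined_system_nontrivial_solution[OF \<open>finite \<Phi>\<close> Y(1), of "\<lambda>y \<phi>. \<phi> y"]
      \<open>\<not> card Y \<le> card \<Phi>\<close> by (auto simp: Sol_def)
  have scale: "Sol (\<lambda>y. a * c y)" if "Sol c" for a c
    using that by (simp add: Sol_def mult.assoc flip: sum_distrib_left)
  obtain c y1 where c: "Sol c" "y1 \<in> Y" "c y1 = 1"
    and minimal: "\<And>d. Sol d \<Longrightarrow> d y1 = 0 \<Longrightarrow> \<forall>y\<in>Y. c y = 0 \<longrightarrow> d y = 0 \<Longrightarrow> \<forall>y\<in>Y. d y = 0"
    using normalized_minimal_support[OF Y(1) c0 scale] by blast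
  \<comment> \<open>\<sigma> maps c to a relation that agrees with c at y1, so by minimality the two coincide.\<close>
  have "c y \<in> fixed_points \<Gamma>" if "y \<in> Y" for y
    unfolding fixed_points_def
  proof (intro CollectI ballI)
    fix \<sigma> assume \<sigma>: "\<sigma> \<in> \<Gamma>"
    note \<sigma>_aut = aut[OF \<sigma>]
    define d where "d y = \<sigma> (c y) - c y" for y
    have "Sol (\<lambda>y. \<sigma> (c y))"
      using ring_automorphism_preserves_relation[OF \<sigma>_aut stable[OF \<sigma>] Y(2)] c(1)
      by (simp add: Sol_def)
    then have "Sol d" using c(1) by (simp add: Sol_def d_def left_diff_distrib sum_subtractf)
    moreover have "d y1 = 0" "\<forall>y\<in>Y. c y = 0 \<longrightarrow> d y = 0"
      using c(3) ring_automorphism_one[OF \<sigma>_aut] ring_automorphism_zero[OF \<sigma>_aut]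
      by (simp_all add: d_def)
    ultimately have "\<forall>y\<in>Y. d y = 0" by (rule minimal)
    then show "\<sigma> (c y) = c y" using that by (simp add: d_def)
  qed
  moreover have "(\<Sum>y\<in>Y. c y * y) = 0"
  proof -
    obtain \<phi> where "\<phi> \<in> \<Phi>" "\<forall>y\<in>L. \<phi> y = y" using ident by blast
    then show ?thesis using c(1) Y(2) by (auto simp: Sol_def subset_iff)
  qed
  ultimately have "c y1 = 0" using Y(3) c(2) unfolding left_indep_def by blast
  with c(3) show False by simp
qed

lemma left_spanning_set_card_le_card_maps:
  fixes \<Gamma> \<Phi> :: "('a::division_ring \<Rightarrow> 'a) set"
  assumes aut: "\<And>\<sigma>. \<sigma> \<in> \<Gamma> \<Longrightarrow> ring_automorphism \<sigma>"
    and "finite \<Phi>"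
    and stable: "\<And>\<sigma> \<phi>. \<sigma> \<in> \<Gamma> \<Longrightarrow> \<phi> \<in> \<Phi> \<Longrightarrow> \<exists>\<psi>\<in>\<Phi>. \<forall>y\<in>L. \<sigma> (\<psi> y) = \<phi> y"
    and ident: "\<exists>\<phi>\<in>\<Phi>. \<forall>y\<in>L. \<phi> y = y"
    and "F \<subseteq> L"
  shows "\<exists>Y. finite Y \<and> Y \<subseteq> F \<and> card Y \<le> card \<Phi> \<and> F \<subseteq> left_span (fixed_points \<Gamma>) Y"
proof (rule left_span_of_bounded_indep)
  show "is_subfield (fixed_points \<Gamma>)" using aut by (rule is_subfield_fixed_points)
  show "card Y \<le> card \<Phi>" if "finite Y" "Y \<subseteq> F" "left_indep (fixed_points \<Gamma>) Y" for Y
    using assms that by (intro left_indep_card_le_card_maps[where L = L]) auto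
qed

section \<open>The opposite ring\<close>

text \<open>
  A right vector space over a division ring is a left vector space over its opposite ring;
  this is how the right-handed statements are obtained from the left-handed ones.
\<close>

datatype 'a opp = Opp (unop: 'a)

instantiation opp :: (division_ring) division_ring
begin
definition "0 = Opp 0"
definition "1 = Opp 1"
definition "a + b = Opp (unop a + unop b)"
definition "- a = Opp (- unop a)"
definition "a - b = Opp (unop a - unop b)"
definition "a * b = Opp (unop b * unop a)"
definition "divide a b = Opp (inverse (unop b) * unop a)"
definition "inverse a = Opp (inverse (unop a))"
instance
proof
  fix a :: "'a opp"
  assume "a \<noteq> 0"
  then have "unop a \<noteq> 0" by (cases a) (simp add: zero_opp_def)
  then show "inverse a * a = 1" "a * inverse a = 1"
    by (simp_all add: times_opp_def inverse_opp_def one_opp_def)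
qed (auto simp: zero_opp_def one_opp_def plus_opp_def uminus_opp_def minus_opp_def
       times_opp_def divide_opp_def inverse_opp_def algebra_simps opp.expand)
end

lemma sum_Opp: "(\<Sum>i\<in>A. Opp (f i)) = Opp (\<Sum>i\<in>A. f i)"
  by (induction A rule: infinite_finite_induct) (simp_all add: zero_opp_def plus_opp_def)

lemma right_span_eq_opp_left_span: "right_span K S = unop ` left_span (Opp ` K) (Opp ` S)"
proof -
  have sum_eq: "(\<Sum>s\<in>Opp ` S. c s * s) = Opp (\<Sum>s\<in>S. s * unop (c (Opp s)))" for c
    by (simp add: sum.reindex inj_on_def times_opp_def flip: sum_Opp)
  show ?thesis
  proof (intro equalityI subsetI)
    fix y assume "y \<in> right_span K S"
    then obtain c where "\<forall>s\<in>S. c s \<in> K" "y = (\<Sum>s\<in>S. s * c s)" by (auto simp: right_span_def)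
    then have "Opp y \<in> left_span (Opp ` K) (Opp ` S)"
      unfolding left_span_def sum_eq by (intro CollectI exI[of _ "\<lambda>s. Opp (c (unop s))"]) auto
    then show "y \<in> unop ` left_span (Opp ` K) (Opp ` S)" by force
  next
    fix y assume "y \<in> unop ` left_span (Opp ` K) (Opp ` S)"
    then obtain c where "\<forall>s\<in>Opp ` S. c s \<in> Opp ` K" "y = unop (\<Sum>s\<in>Opp ` S. c s * s)"
      by (auto simp: left_span_def)
    then show "y \<in> right_span K S"
      unfolding right_span_def sum_eq by (intro CollectI exI[of _ "\<lambda>s. unop (c (Opp s))"]) force
  qed
qed

definition opp_map :: "('a \<Rightarrow> 'a) \<Rightarrow> 'a opp \<Rightarrow> 'a opp" where
  "opp_map \<sigma> x = Opp (\<sigma> (unop x))"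

lemma ring_automorphism_opp_map:
  assumes "ring_automorphism \<sigma>"
  shows "ring_automorphism (opp_map \<sigma>)"
proof -
  have "bij \<sigma>" using assms by (simp add: ring_automorphism_def)
  then have "bij (opp_map \<sigma>)"
    by (intro o_bij[of "opp_map (inv_into UNIV \<sigma>)"])
      (auto simp: opp_map_def fun_eq_iff bij_def surj_f_inv_f inv_f_f)
  then show ?thesis using assms
    by (simp add: ring_automorphism_def opp_map_def plus_opp_def times_opp_def one_opp_def)
qed

lemma Opp_fixed_points: "Opp ` fixed_points \<Gamma> = fixed_points (opp_map ` \<Gamma>)"
proof (intro equalityI subsetI)
  fix x assume "x \<in> fixed_points (opp_map ` \<Gamma>)"
  then have "unop x \<in> fixed_points \<Gamma>" by (auto simp: fixed_points_def opp_map_def) (metis opp.sel)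
  then show "x \<in> Opp ` fixed_points \<Gamma>" by (metis image_eqI opp.collapse)
qed (auto simp: fixed_points_def opp_map_def)

lemma right_spanning_set_card_le_card_maps:
  fixes \<Gamma> \<Phi> :: "('a::division_ring \<Rightarrow> 'a) set"
  assumes aut: "\<And>\<sigma>. \<sigma> \<in> \<Gamma> \<Longrightarrow> ring_automorphism \<sigma>"
    and "finite \<Phi>"
    and stable: "\<And>\<sigma> \<phi>. \<sigma> \<in> \<Gamma> \<Longrightarrow> \<phi> \<in> \<Phi> \<Longrightarrow> \<exists>\<psi>\<in>\<Phi>. \<forall>y\<in>L. \<sigma> (\<psi> y) = \<phi> y"
    and ident: "\<exists>\<phi>\<in>\<Phi>. \<forall>y\<in>L. \<phi> y = y"
    and "F \<subseteq> L"
  shows "\<exists>Y. finite Y \<and> Y \<subseteq> F \<and> card Y \<le> card \<Phi> \<and> F \<subseteq> right_span (fixed_points \<Gamma>) Y"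
proof -
  have "\<exists>Y'. finite Y' \<and> Y' \<subseteq> Opp ` F \<and> card Y' \<le> card (opp_map ` \<Phi>)
    \<and> Opp ` F \<subseteq> left_span (fixed_points (opp_map ` \<Gamma>)) Y'"
  proof (rule left_spanning_set_card_le_card_maps)
    show "ring_automorphism \<sigma>'" if "\<sigma>' \<in> opp_map ` \<Gamma>" for \<sigma>'
      using that aut ring_automorphism_opp_map by blast
    show "\<exists>\<psi>'\<in>opp_map ` \<Phi>. \<forall>y\<in>Opp ` L. \<sigma>' (\<psi>' y) = \<phi>' y"
      if "\<sigma>' \<in> opp_map ` \<Gamma>" "\<phi>' \<in> opp_map ` \<Phi>" for \<sigma>' \<phi>'
      using that stable by (fastforce simp: opp_map_def)
    show "\<exists>\<phi>'\<in>opp_map ` \<Phi>. \<forall>y\<in>Opp ` L. \<phi>' y = y"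
      using ident by (force simp: opp_map_def)
  qed (use \<open>finite \<Phi>\<close> \<open>F \<subseteq> L\<close> in auto)
  then obtain Y' where Y': "finite Y'" "Y' \<subseteq> Opp ` F" "card Y' \<le> card (opp_map ` \<Phi>)"
    "Opp ` F \<subseteq> left_span (fixed_points (opp_map ` \<Gamma>)) Y'" by blast
  have "right_span (fixed_points \<Gamma>) (unop ` Y') = unop ` left_span (fixed_points (opp_map ` \<Gamma>)) Y'"
    by (simp add: right_span_eq_opp_left_span Opp_fixed_points image_image)
  moreover have "F = unop ` Opp ` F" by (simp add: image_image)
  ultimately have "F \<subseteq> right_span (fixed_points \<Gamma>) (unop ` Y')"
    using image_mono[OF Y'(4), of unop] by simp
  moreover have "card (unop ` Y') \<le> card \<Phi>"
    using card_image_le[OF Y'(1), of unop] Y'(3) card_image_le[OF \<open>finite \<Phi>\<close>, of opp_map]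
    by linarith
  moreover have "finite (unop ` Y')" "unop ` Y' \<subseteq> F" using Y'(1,2) by auto
  ultimately show ?thesis by (intro exI[of _ "unop ` Y'"]) simp
qed

section \<open>Dedekind independence in outer extensions\<close>

lemma outer_ext_intertwined_eq:
  assumes outer: "outer_ext K" and "K \<subseteq> L" and \<sigma>: "\<sigma> \<in> Gal K" "\<tau> \<in> Gal K"
    and "w \<noteq> 0" and intertwine: "\<And>z. z \<in> L \<Longrightarrow> w * \<tau> z = \<sigma> z * w"
    and "y \<in> L"
  shows "\<tau> y = \<sigma> y"
proof -
  have "w * k * inverse w = k" if "k \<in> K" for k
  proof -
    have "w * k = k * w" using intertwine[of k] that \<open>K \<subseteq> L\<close> \<sigma> by (auto simp: Gal_def)
    then show ?thesis using \<open>w \<noteq> 0\<close> by (metis mult.assoc right_inverse mult_1_right)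
  qed
  then have central: "w * z * inverse w = z" for z
    using outer \<open>w \<noteq> 0\<close> unfolding outer_ext_def by blast
  have "w * \<tau> y = w * \<sigma> y"
    using intertwine[OF \<open>y \<in> L\<close>] central[of "\<sigma> y"] \<open>w \<noteq> 0\<close>
    by (metis mult.assoc mult_1_right left_inverse)
  then show ?thesis using \<open>w \<noteq> 0\<close> by simp
qed

lemma multiplicative_relation_shift:
  fixes M :: "('a::semiring_0 \<Rightarrow> 'a) set"
  assumes hom: "\<And>\<phi> y. \<phi> \<in> M \<Longrightarrow> y \<in> L \<Longrightarrow> \<phi> (z * y) = \<phi> z * \<phi> y"
    and mult: "\<And>y. y \<in> L \<Longrightarrow> z * y \<in> L"
    and rel: "\<forall>y\<in>L. (\<Sum>\<phi>\<in>M. c \<phi> * \<phi> y) = 0"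
  shows "\<forall>y\<in>L. (\<Sum>\<phi>\<in>M. c \<phi> * \<phi> z * \<phi> y) = 0"
proof
  fix y assume "y \<in> L"
  then have "(\<Sum>\<phi>\<in>M. c \<phi> * \<phi> z * \<phi> y) = (\<Sum>\<phi>\<in>M. c \<phi> * \<phi> (z * y))"
    using hom by (simp add: mult.assoc)
  then show "(\<Sum>\<phi>\<in>M. c \<phi> * \<phi> z * \<phi> y) = 0" using rel mult \<open>y \<in> L\<close> by simp
qed

lemma outer_ext_restrictions_independent:
  fixes M :: "('a::division_ring \<Rightarrow> 'a) set"
  assumes outer: "outer_ext K" and L: "is_subfield L" "K \<subseteq> L"
    and "finite M" and M: "\<And>\<phi>. \<phi> \<in> M \<Longrightarrow> \<exists>\<sigma>\<in>Gal K. \<phi> = restrict \<sigma> L"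
    and rel: "\<And>y. y \<in> L \<Longrightarrow> (\<Sum>\<phi>\<in>M. c0 \<phi> * \<phi> y) = 0"
  shows "\<forall>\<phi>\<in>M. c0 \<phi> = 0"
proof (rule ccontr)
  assume "\<not> (\<forall>\<phi>\<in>M. c0 \<phi> = 0)"
  then obtain \<phi>0 where \<phi>0: "\<phi>0 \<in> M" "c0 \<phi>0 \<noteq> 0" by blast
  define Rel where "Rel c \<longleftrightarrow> (\<forall>y\<in>L. (\<Sum>\<phi>\<in>M. c \<phi> * \<phi> y) = 0)" for c
  have scale: "Rel (\<lambda>\<phi>. a * c \<phi>)" if "Rel c" for a c
    using that by (simp add: Rel_def mult.assoc flip: sum_distrib_left)
  obtain c \<phi>1 where c: "Rel c" "\<phi>1 \<in> M" "c \<phi>1 = 1"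
    and minimal: "\<And>d. Rel d \<Longrightarrow> d \<phi>1 = 0 \<Longrightarrow> \<forall>\<phi>\<in>M. c \<phi> = 0 \<longrightarrow> d \<phi> = 0 \<Longrightarrow> \<forall>\<phi>\<in>M. d \<phi> = 0"
    using normalized_minimal_support[OF \<open>finite M\<close>, of Rel c0 \<phi>0] rel \<phi>0 scale
    unfolding Rel_def by blast
  have L1: "1 \<in> L" and L_mult: "\<And>y z. y \<in> L \<Longrightarrow> z \<in> L \<Longrightarrow> z * y \<in> L"
    using L(1) by (auto simp: is_subfield_def)
  have hom: "\<phi> (z * y) = \<phi> z * \<phi> y" if "\<phi> \<in> M" "y \<in> L" "z \<in> L" for \<phi> y z
    using M[OF that(1)] that(2,3) L_mult[OF that(2,3)] by (auto simp: Gal_def ring_automorphism_mult)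
  have intertwine: "c \<phi> * \<phi> z = \<phi>1 z * c \<phi>" if "\<phi> \<in> M" "z \<in> L" for \<phi> z
  proof -
    define e where "e \<phi> = c \<phi> * \<phi> z - \<phi>1 z * c \<phi>" for \<phi>
    have "Rel (\<lambda>\<phi>. c \<phi> * \<phi> z)" unfolding Rel_def
      by (rule multiplicative_relation_shift) (use hom L_mult that(2) c(1) in \<open>auto simp: Rel_def\<close>)
    moreover have "Rel (\<lambda>\<phi>. \<phi>1 z * c \<phi>)" using c(1) by (rule scale)
    ultimately have "Rel e" by (simp add: Rel_def e_def left_diff_distrib sum_subtractf)
    then have "\<forall>\<phi>\<in>M. e \<phi> = 0" by (rule minimal) (simp_all add: e_def c(3))
    then show ?thesis using that(1) by (simp add: e_def)
  qed
  have "\<exists>\<phi>2\<in>M. \<phi>2 \<noteq> \<phi>1 \<and> c \<phi>2 \<noteq> 0"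
  proof (rule ccontr)
    assume "\<not> ?thesis"
    then have "(\<Sum>\<phi>\<in>M - {\<phi>1}. c \<phi> * \<phi> 1) = 0" by (intro sum.neutral) auto
    moreover have "\<phi>1 1 = 1" using M[OF c(2)] L1 by (auto simp: Gal_def ring_automorphism_one)
    ultimately have "(\<Sum>\<phi>\<in>M. c \<phi> * \<phi> 1) = 1"
      using c(2,3) \<open>finite M\<close> by (simp add: sum.remove)
    then show False using c(1) L1 by (simp add: Rel_def)
  qed
  then obtain \<phi>2 where \<phi>2: "\<phi>2 \<in> M" "\<phi>2 \<noteq> \<phi>1" "c \<phi>2 \<noteq> 0" by blast
  obtain \<sigma>1 \<sigma>2 where \<sigma>: "\<sigma>1 \<in> Gal K" "\<phi>1 = restrict \<sigma>1 L" "\<sigma>2 \<in> Gal K" "\<phi>2 = restrict \<sigma>2 L"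
    using M c(2) \<phi>2(1) by blast
  have "\<sigma>2 y = \<sigma>1 y" if "y \<in> L" for y
    using outer_ext_intertwined_eq[OF outer L(2) \<sigma>(1,3) \<phi>2(3) _ that] intertwine[OF \<phi>2(1)] \<sigma>
    by simp
  then have "\<phi>2 = \<phi>1" using \<sigma>(2,4) by auto
  with \<phi>2(2) show False by contradiction
qed

lemma card_restrictions_le_right_span:
  fixes M :: "('a::division_ring \<Rightarrow> 'a) set"
  assumes outer: "outer_ext K" and L: "is_subfield L" "K \<subseteq> L"
    and "finite M" and M: "\<And>\<phi>. \<phi> \<in> M \<Longrightarrow> \<exists>\<sigma>\<in>Gal K. \<phi> = restrict \<sigma> L"
    and Y: "finite Y" "Y \<subseteq> L" "L \<subseteq> right_span K Y"
  shows "card M \<le> card Y"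
proof (rule ccontr)
  assume "\<not> card M \<le> card Y"
  then obtain c where c: "\<exists>\<phi>\<in>M. c \<phi> \<noteq> 0" "\<forall>b\<in>Y. (\<Sum>\<phi>\<in>M. c \<phi> * \<phi> b) = 0"
    using underdetermined_system_nontrivial_solution[OF Y(1) \<open>finite M\<close>, of "\<lambda>\<phi> b. \<phi> b"]
    by auto
  have rel: "(\<Sum>\<phi>\<in>M. c \<phi> * \<phi> y) = 0" if "y \<in> L" for y
  proof -
    obtain k where k: "\<forall>b\<in>Y. k b \<in> K" "y = (\<Sum>b\<in>Y. b * k b)"
      using Y(3) \<open>y \<in> L\<close> by (auto simp: right_span_def)
    have "\<phi> y = (\<Sum>b\<in>Y. \<phi> b * k b)" if "\<phi> \<in> M" for \<phi>
      using M[OF that] \<open>y \<in> L\<close> k Y(2)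
      by (auto simp: Gal_def ring_automorphism_sum ring_automorphism_mult subset_iff
          intro!: sum.cong)
    then have "(\<Sum>\<phi>\<in>M. c \<phi> * \<phi> y) = (\<Sum>\<phi>\<in>M. c \<phi> * (\<Sum>b\<in>Y. \<phi> b * k b))"
      by simp
    also have "\<dots> = (\<Sum>b\<in>Y. (\<Sum>\<phi>\<in>M. c \<phi> * \<phi> b) * k b)"
      by (simp add: sum_distrib_left sum_distrib_right mult.assoc sum.swap[of _ M])
    also have "\<dots> = 0" using c(2) by simp
    finally show ?thesis .
  qed
  have "\<forall>\<phi>\<in>M. c \<phi> = 0" by (rule outer_ext_restrictions_independent[OF outer L \<open>finite M\<close> M rel])
  with c(1) show False by blast
qed

section \<open>Compact groups acting with open stabilizers\<close>

lemma act_in_Gal_fixed_field: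
  assumes "action_by_automorphisms G act" "g \<in> carrier G"
  shows "act g \<in> Gal (fixed_field G act)"
  using assms by (simp add: action_by_automorphisms_def Gal_def fixed_field_def)

lemma galois_ext_fixed_field:
  assumes "action_by_automorphisms G act"
  shows "galois_ext (fixed_field G act)"
  using act_in_Gal_fixed_field[OF assms]
  unfolding galois_ext_def by (auto simp: fixed_field_def Gal_def)

locale compact_group =
  fixes G :: "('g, 'm) monoid_scheme" (structure) and T :: "'g topology"
  assumes topological_group: "topological_group_on G T" and compact: "compact_space T"

sublocale compact_group \<subseteq> group G
  using topological_group by (simp add: topological_group_on_def)

context compact_group
begin

lemma topspace_eq [simp]: "topspace T = carrier G"
  using topological_group by (simp add: topological_group_on_def)

lemma continuous_map_left_mult: "a \<in> carrier G \<Longrightarrow> continuous_map T T (\<lambda>b. a \<otimes> b)"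
proof -
  assume "a \<in> carrier G"
  then have "continuous_map T (prod_topology T T) (\<lambda>b. (a, b))"
    by (intro continuous_map_pairedI) auto
  then have "continuous_map T T ((\<lambda>(a, b). a \<otimes> b) \<circ> (\<lambda>b. (a, b)))"
    using topological_group by (intro continuous_map_compose) (auto simp: topological_group_on_def)
  then show ?thesis by (simp add: o_def)
qed

lemma openin_left_coset:
  "a \<in> carrier G \<Longrightarrow> openin T U \<Longrightarrow> openin T {g \<in> carrier G. inv a \<otimes> g \<in> U}"
  using openin_continuous_map_preimage[OF continuous_map_left_mult[of "inv a"]] by simp

lemma finite_cover_by_left_cosets:
  assumes "openin T U" "\<one> \<in> U"
  obtains R where "finite R" "R \<subseteq> carrier G" "\<And>g. g \<in> carrier G \<Longrightarrow> \<exists>r\<in>R. inv r \<otimes> g \<in> U"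
proof -
  define V where "V r = {g \<in> carrier G. inv r \<otimes> g \<in> U}" for r
  have "\<forall>W\<in>V ` carrier G. openin T W" using openin_left_coset assms(1) by (simp add: V_def)
  moreover have "topspace T \<subseteq> \<Union>(V ` carrier G)" using assms(2) by (force simp: V_def)
  ultimately obtain F where "finite F" "F \<subseteq> V ` carrier G" "topspace T \<subseteq> \<Union>F"
    using compact unfolding compact_space_alt by meson
  then obtain R where R: "R \<subseteq> carrier G" "finite R" "carrier G \<subseteq> \<Union>(V ` R)"
    by (metis finite_subset_image topspace_eq)
  show thesis
  proof (rule that)
    show "\<exists>r\<in>R. inv r \<otimes> g \<in> U" if "g \<in> carrier G" for g using R(3) that by (auto simp: V_def)
  qed (use R in auto)
qed

end

locale compact_group_action = compact_group +
  fixes act :: "'g \<Rightarrow> 'a::division_ring \<Rightarrow> 'a"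
  assumes action: "action_by_automorphisms G act"
    and openin_point_stabilizer: "\<And>x. openin T {g \<in> carrier G. act g x = x}"
begin

lemma ring_automorphism_act: "g \<in> carrier G \<Longrightarrow> ring_automorphism (act g)"
  using action by (simp add: action_by_automorphisms_def)

lemma act_mult: "g \<in> carrier G \<Longrightarrow> h \<in> carrier G \<Longrightarrow> act (g \<otimes> h) y = act g (act h y)"
  using action by (simp add: action_by_automorphisms_def)

lemma act_one: "act \<one> y = y"
  using action by (simp add: action_by_automorphisms_def)

lemma fixed_field_eq_fixed_points: "fixed_field G act = fixed_points (act ` carrier G)"
  by (auto simp: fixed_field_def fixed_points_def)

definition stabilizer :: "'a set \<Rightarrow> 'g set" where
  "stabilizer X = {g \<in> carrier G. \<forall>x\<in>X. act g x = x}"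

definition stabilizer_fixed_field :: "'a set \<Rightarrow> 'a set" where
  "stabilizer_fixed_field X = fixed_points (act ` stabilizer X)"

definition restrictions :: "'a set \<Rightarrow> ('a \<Rightarrow> 'a) set" where
  "restrictions X = (\<lambda>g. restrict (act g) (stabilizer_fixed_field X)) ` carrier G"

lemma openin_stabilizer: "finite X \<Longrightarrow> openin T (stabilizer X)"
proof (induction X rule: finite_induct)
  case empty
  then show ?case using openin_topspace[of T] by (simp add: stabilizer_def)
next
  case (insert x X)
  have "stabilizer (insert x X) = {g \<in> carrier G. act g x = x} \<inter> stabilizer X"
    by (auto simp: stabilizer_def)
  then show ?case using insert.IH openin_point_stabilizer by (simp add: openin_Int)
qed

lemma one_in_stabilizer: "\<one> \<in> stabilizer X"
  by (simp add: stabilizer_def act_one)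

lemma subset_stabilizer_fixed_field: "X \<subseteq> stabilizer_fixed_field X"
  by (auto simp: stabilizer_fixed_field_def stabilizer_def fixed_points_def)

lemma fixed_field_subset_stabilizer_fixed_field: "fixed_field G act \<subseteq> stabilizer_fixed_field X"
  by (auto simp: stabilizer_fixed_field_def stabilizer_def fixed_points_def fixed_field_def)

lemma is_subfield_stabilizer_fixed_field: "is_subfield (stabilizer_fixed_field X)"
  unfolding stabilizer_fixed_field_def
  by (rule is_subfield_fixed_points) (auto simp: stabilizer_def ring_automorphism_act)

lemma act_left_coset_stabilizer:
  assumes "g \<in> carrier G" "h \<in> carrier G" "inv g \<otimes> h \<in> stabilizer X"
    and "y \<in> stabilizer_fixed_field X"
  shows "act h y = act g y"
proof -
  have "h = g \<otimes> (inv g \<otimes> h)" using assms(1,2) by (simp flip: m_assoc)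
  then have "act h y = act g (act (inv g \<otimes> h) y)"
    using assms(1,2) by (metis act_mult inv_closed m_closed)
  also have "\<dots> = act g y" using assms(3,4) by (simp add: stabilizer_fixed_field_def fixed_points_def)
  finally show ?thesis .
qed

lemma finite_restrictions: "finite X \<Longrightarrow> finite (restrictions X)"
proof -
  assume "finite X"
  obtain R where R: "finite R" "R \<subseteq> carrier G"
    "\<And>g. g \<in> carrier G \<Longrightarrow> \<exists>r\<in>R. inv r \<otimes> g \<in> stabilizer X"
    using finite_cover_by_left_cosets[OF openin_stabilizer[OF \<open>finite X\<close>] one_in_stabilizer]
    by blast
  have "restrictions X \<subseteq> (\<lambda>r. restrict (act r) (stabilizer_fixed_field X)) ` R"
  proof
    fix \<phi> assume "\<phi> \<in> restrictions X"
    then obtain g where g: "g \<in> carrier G" "\<phi> = restrict (act g) (stabilizer_fixed_field X)"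
      by (auto simp: restrictions_def)
    then obtain r where r: "r \<in> R" "inv r \<otimes> g \<in> stabilizer X" using R(3) by blast
    then have "\<phi> = restrict (act r) (stabilizer_fixed_field X)"
      using g R(2) act_left_coset_stabilizer by (auto intro!: restrict_ext)
    then show "\<phi> \<in> (\<lambda>r. restrict (act r) (stabilizer_fixed_field X)) ` R" using r(1) by blast
  qed
  then show ?thesis using R(1) finite_subset by blast
qed

lemma restrictions_stable:
  assumes "\<sigma> \<in> act ` carrier G" "\<phi> \<in> restrictions X"
  shows "\<exists>\<psi>\<in>restrictions X. \<forall>y\<in>stabilizer_fixed_field X. \<sigma> (\<psi> y) = \<phi> y"
proof -
  obtain s g where "s \<in> carrier G" "\<sigma> = act s" "g \<in> carrier G"
    "\<phi> = restrict (act g) (stabilizer_fixed_field X)"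
    using assms by (auto simp: restrictions_def)
  then show ?thesis
    by (intro bexI[of _ "restrict (act (inv s \<otimes> g)) (stabilizer_fixed_field X)"])
      (auto simp: restrictions_def m_assoc[symmetric] simp flip: act_mult)
qed

lemma restrictions_contain_identity: "\<exists>\<phi>\<in>restrictions X. \<forall>y\<in>stabilizer_fixed_field X. \<phi> y = y"
  by (auto simp: restrictions_def act_one intro!: bexI[of _ \<one>])

lemma spanning_set_card_le_card_restrictions:
  assumes "finite X" "F \<subseteq> stabilizer_fixed_field X"
  shows left_spanning_set: "\<exists>Y. finite Y \<and> Y \<subseteq> F \<and> card Y \<le> card (restrictions X)
      \<and> F \<subseteq> left_span (fixed_field G act) Y"
    and right_spanning_set: "\<exists>Y. finite Y \<and> Y \<subseteq> F \<and> card Y \<le> card (restrictions X)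
      \<and> F \<subseteq> right_span (fixed_field G act) Y"
proof -
  have "\<And>\<sigma>. \<sigma> \<in> act ` carrier G \<Longrightarrow> ring_automorphism \<sigma>"
    using ring_automorphism_act by blast
  note hyps = this finite_restrictions[OF assms(1)] restrictions_stable
    restrictions_contain_identity assms(2)
  show "\<exists>Y. finite Y \<and> Y \<subseteq> F \<and> card Y \<le> card (restrictions X)
      \<and> F \<subseteq> left_span (fixed_field G act) Y"
    unfolding fixed_field_eq_fixed_points by (rule left_spanning_set_card_le_card_maps[OF hyps])
  show "\<exists>Y. finite Y \<and> Y \<subseteq> F \<and> card Y \<le> card (restrictions X)
      \<and> F \<subseteq> right_span (fixed_field G act) Y"
    unfolding fixed_field_eq_fixed_points by (rule right_spanning_set_card_le_card_maps[OF hyps])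
qed

lemma algebraic_ext_fixed_field: "algebraic_ext (fixed_field G act)"
  unfolding algebraic_ext_def algebraic_over_def left_fin_dim_def right_fin_dim_def
proof
  fix x
  have "x \<in> stabilizer_fixed_field {x}" using subset_stabilizer_fixed_field[of "{x}"] by simp
  then have sub: "gen_subfield (fixed_field G act) x \<subseteq> stabilizer_fixed_field {x}"
    by (rule gen_subfield_least[OF is_subfield_stabilizer_fixed_field
          fixed_field_subset_stabilizer_fixed_field])
  have "finite {x}" by simp
  from left_spanning_set[OF this sub] right_spanning_set[OF this sub]
  show "(\<exists>S. finite S \<and> S \<subseteq> gen_subfield (fixed_field G act) x
      \<and> gen_subfield (fixed_field G act) x \<subseteq> left_span (fixed_field G act) S)
    \<and> (\<exists>S. finite S \<and> S \<subseteq> gen_subfield (fixed_field G act) x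
      \<and> gen_subfield (fixed_field G act) x \<subseteq> right_span (fixed_field G act) S)"
    by blast
qed

lemma Gal_restriction_in_restrictions:
  assumes outer: "outer_ext (fixed_field G act)" and f: "f \<in> Gal (fixed_field G act)"
    and "finite X"
  shows "restrict f (stabilizer_fixed_field X) \<in> restrictions X"
proof (rule ccontr)
  let ?L = "stabilizer_fixed_field X"
  let ?M = "insert (restrict f ?L) (restrictions X)"
  assume "restrict f ?L \<notin> restrictions X"
  then have card_M: "card ?M = Suc (card (restrictions X))"
    using finite_restrictions[OF \<open>finite X\<close>] by simp
  obtain Y where Y: "finite Y" "Y \<subseteq> ?L" "card Y \<le> card (restrictions X)"
    "?L \<subseteq> right_span (fixed_field G act) Y"
    using right_spanning_set[OF \<open>finite X\<close> subset_refl] by blast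
  have "card ?M \<le> card Y"
  proof (rule card_restrictions_le_right_span[OF outer is_subfield_stabilizer_fixed_field
        fixed_field_subset_stabilizer_fixed_field _ _ Y(1,2,4)])
    show "finite ?M" using finite_restrictions[OF \<open>finite X\<close>] by simp
    show "\<exists>\<sigma>\<in>Gal (fixed_field G act). \<phi> = restrict \<sigma> ?L" if "\<phi> \<in> ?M" for \<phi>
      using that f act_in_Gal_fixed_field[OF action] by (auto simp: restrictions_def)
  qed
  with card_M Y(3) show False by simp
qed

lemma Gal_agrees_with_act_on_finite:
  assumes "outer_ext (fixed_field G act)" "f \<in> Gal (fixed_field G act)" "finite X"
  shows "\<exists>g\<in>carrier G. \<forall>x\<in>X. act g x = f x"
proof -
  obtain g where "g \<in> carrier G"
    "restrict f (stabilizer_fixed_field X) = restrict (act g) (stabilizer_fixed_field X)"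
    using Gal_restriction_in_restrictions[OF assms] by (auto simp: restrictions_def)
  then show ?thesis using subset_stabilizer_fixed_field[of X] by (metis restrict_apply' subsetD)
qed

lemma closedin_act_eq: "closedin T {g \<in> carrier G. act g x = y}"
proof -
  have "openin T {g \<in> carrier G. act g x = z}" for z
  proof (subst openin_subopen, intro ballI)
    fix g assume g: "g \<in> {g \<in> carrier G. act g x = z}"
    let ?V = "{h \<in> carrier G. inv g \<otimes> h \<in> stabilizer {x}}"
    have "openin T ?V" using g by (intro openin_left_coset openin_stabilizer) auto
    moreover have "g \<in> ?V" using g one_in_stabilizer by simp
    moreover have "?V \<subseteq> {g \<in> carrier G. act g x = z}"
      using g act_left_coset_stabilizer subset_stabilizer_fixed_field[of "{x}"] by auto
    ultimately show "\<exists>V. openin T V \<and> g \<in> V \<and> V \<subseteq> {g \<in> carrier G. act g x = z}" by blast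
  qed
  moreover have "topspace T - {g \<in> carrier G. act g x = y}
      = (\<Union>z\<in>- {y}. {g \<in> carrier G. act g x = z})"
    by auto
  ultimately show ?thesis unfolding closedin_def by auto
qed

lemma Gal_eq_act_image:
  assumes outer: "outer_ext (fixed_field G act)"
  shows "Gal (fixed_field G act) = act ` carrier G"
proof
  show "act ` carrier G \<subseteq> Gal (fixed_field G act)"
    using act_in_Gal_fixed_field[OF action] by blast
  show "Gal (fixed_field G act) \<subseteq> act ` carrier G"
  proof
    fix f assume f: "f \<in> Gal (fixed_field G act)"
    define C where "C x = {g \<in> carrier G. act g x = f x}" for x
    have "\<Inter>(range C) \<noteq> {}"
    proof (rule compact_space_fip[THEN iffD1, OF compact, rule_format], safe)
      show "closedin T (C x)" for x by (simp add: C_def closedin_act_eq)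
    next
      fix \<F> assume "finite \<F>" "\<F> \<subseteq> range C" "\<Inter>\<F> = {}"
      then obtain X where "finite X" "\<F> = C ` X" by (meson finite_subset_image)
      then obtain g where "g \<in> carrier G" "\<forall>x\<in>X. act g x = f x"
        using Gal_agrees_with_act_on_finite[OF outer f] by blast
      then have "g \<in> \<Inter>\<F>" using \<open>\<F> = C ` X\<close> by (simp add: C_def)
      with \<open>\<Inter>\<F> = {}\<close> show False by blast
    qed
    then obtain g where "g \<in> carrier G" "\<And>x. act g x = f x" by (auto simp: C_def)
    then show "f \<in> act ` carrier G" by (metis ext image_eqI)
  qed
qed

end

theorem lemma3:
  fixes G :: "('g, 'm) monoid_scheme" and T :: "'g topology"
    and act :: "'g \<Rightarrow> 'a::division_ring \<Rightarrow> 'a"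
  assumes "profinite_group G T"
    and "action_by_automorphisms G act"
    and "inj_on act (carrier G)"
    and "\<And>x. openin T {g \<in> carrier G. act g x = x}"
    and "outer_ext (fixed_field G act)"
  shows "algebraic_ext (fixed_field G act) \<and> galois_ext (fixed_field G act)
         \<and> Gal (fixed_field G act) = act ` carrier G"
proof -
  interpret compact_group_action G T act
    by unfold_locales (use assms in \<open>auto simp: profinite_group_def\<close>)
  show ?thesis
    using algebraic_ext_fixed_field galois_ext_fixed_field[OF assms(2)]
      Gal_eq_act_image[OF assms(5)]
    by blast
qed

end
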